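(* Let $n\geq 3$, $q\geq 1$ with $\gcd(q,n-1)=1$, $k=-n+\frac{n-1}{q}$, $\beta_0=q\delta-\theta$, and let $\sigma:(\widehat W,S)\to(\widehat W(k\Lambda_0),S(k\Lambda_0))$ be the Coxeter isomorphism with $\sigma(s_{\alpha_0})=s_{\beta_0}$ and $\sigma(s_{\alpha_i})=s_{\alpha_i}$ for $1\leq i\leq n-1$. Then for every $\gamma$ in the root lattice $Q$ of $sl_n$, $\sigma(t_\gamma)=t_{q\gamma}$.
   Context: Affine $\widehat{sl}_n$ with simple roots $\alpha_0=\delta-\theta,\alpha_1,\dots,\alpha_{n-1}$, invariant form $(\cdot|\cdot)$, reflections $s_\alpha$; $\widehat W$ the affine Weyl group, $S=\{s_{\alpha_i}\}$; $\widehat W(k\Lambda_0)$ is the group generated by reflections in real roots $\alpha$ with $(k\Lambda_0+\widehat\rho|\alpha^\vee)\in\mathbb Z$, with simple reflections $S(k\Lambda_0)=\{s_{\beta_0},s_{\alpha_1},\dots,s_{\alpha_{n-1}}\}$. For $\gamma\in\mathfrak h^*$, $t_\gamma$ is the linear map $t_\gamma(\lambda)=\lambda+(\lambda|\delta)\gamma-\big((\lambda|\gamma)+\frac12(\lambda|\delta)(\gamma|\gamma)\big)\delta$ on $\widehat{\mathfrak h}^*$; for $\gamma\in Q$ one has $t_\gamma\in\widehat W$ and $t_{q\gamma}\in\widehat W(k\Lambda_0)$. *)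

theory Defs
  imports Main Complex_Main
begin

text \<open>Concrete model of the dual Cartan subalgebra of affine sl_n.
  An element is a triple (v, a, b) standing for  v + a Lambda_0 + b delta,
  where v :: nat => real is the finite part; the Cartan dual of sl_n is the set of v
  with v i = 0 for i >= n and sum of v i over i < n equal to 0 (coordinates 0-based,
  e_i - e_j realisation of the roots). Linear maps are taken on the whole type; all maps
  considered act trivially on the complement of hhat n, so nothing is lost.\<close>

type_synonym hs = "(nat \<Rightarrow> real) \<times> real \<times> real"

definition hhat :: "nat \<Rightarrow> hs set" where
  "hhat n = {(v, a, b). (\<forall>i\<ge>n. v i = 0) \<and> (\<Sum>i<n. v i) = 0}"

definition hadd :: "hs \<Rightarrow> hs \<Rightarrow> hs" where
  "hadd x y = (\<lambda>i. fst x i + fst y i, fst (snd x) + fst (snd y), snd (snd x) + snd (snd y))"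

definition hscale :: "real \<Rightarrow> hs \<Rightarrow> hs" where
  "hscale c x = (\<lambda>i. c * fst x i, c * fst (snd x), c * snd (snd x))"

definition hsub :: "hs \<Rightarrow> hs \<Rightarrow> hs" where
  "hsub x y = hadd x (hscale (-1) y)"

definition form :: "nat \<Rightarrow> hs \<Rightarrow> hs \<Rightarrow> real" where
  "form n x y = (\<Sum>i<n. fst x i * fst y i) + fst (snd x) * snd (snd y) + snd (snd x) * fst (snd y)"

definition delta :: hs where "delta = (\<lambda>_. 0, 0, 1)"
definition Lambda0 :: hs where "Lambda0 = (\<lambda>_. 0, 1, 0)"

definition fin :: "(nat \<Rightarrow> real) \<Rightarrow> hs" where "fin v = (v, 0, 0)"

definition ee :: "nat \<Rightarrow> nat \<Rightarrow> real" where "ee i = (\<lambda>j. if j = i then 1 else 0)"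

definition froot :: "nat \<Rightarrow> nat \<Rightarrow> hs" where
  "froot i j = fin (\<lambda>l. ee i l - ee j l)"

definition alpha :: "nat \<Rightarrow> hs" where "alpha i = froot (i - 1) i"

definition theta :: "nat \<Rightarrow> hs" where "theta n = froot 0 (n - 1)"

definition alpha0 :: "nat \<Rightarrow> hs" where "alpha0 n = hsub delta (theta n)"

definition beta0 :: "nat \<Rightarrow> nat \<Rightarrow> hs" where
  "beta0 n q = hsub (hscale (real q) delta) (theta n)"

definition copair :: "nat \<Rightarrow> hs \<Rightarrow> hs \<Rightarrow> real" where
  "copair n l a = 2 * form n l a / form n a a"

definition refl :: "nat \<Rightarrow> hs \<Rightarrow> hs \<Rightarrow> hs" where
  "refl n a l = hsub l (hscale (copair n l a) a)"

definition real_roots :: "nat \<Rightarrow> hs set" where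
  "real_roots n = {hadd (froot i j) (hscale (of_int m) delta) | i j m. i < n \<and> j < n \<and> i \<noteq> j}"

text \<open>rho = half the sum of positive roots of sl_n; rho_hat = rho + h^vee Lambda_0, h^vee = n.\<close>
definition rho :: "nat \<Rightarrow> hs" where
  "rho n = fin (\<lambda>l. (1/2) * (\<Sum>i<n. \<Sum>j<n. if i < j then ee i l - ee j l else 0))"

definition rho_hat :: "nat \<Rightarrow> hs" where
  "rho_hat n = hadd (rho n) (hscale (real n) Lambda0)"

text \<open>Group generated by a set of maps (all generators used are involutions, so the
  monoid generated under composition is the generated group).\<close>
inductive_set gen_group :: "(hs \<Rightarrow> hs) set \<Rightarrow> (hs \<Rightarrow> hs) set" for S where
  gen_id: "id \<in> gen_group S"
| gen_step: "f \<in> gen_group S \<Longrightarrow> s \<in> S \<Longrightarrow> s \<circ> f \<in> gen_group S"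

definition S_aff :: "nat \<Rightarrow> (hs \<Rightarrow> hs) set" where
  "S_aff n = {refl n (alpha0 n)} \<union> {refl n (alpha i) | i. 1 \<le> i \<and> i \<le> n - 1}"

definition W_aff :: "nat \<Rightarrow> (hs \<Rightarrow> hs) set" where
  "W_aff n = gen_group (S_aff n)"

definition W_k :: "nat \<Rightarrow> real \<Rightarrow> (hs \<Rightarrow> hs) set" where
  "W_k n k = gen_group {refl n a | a. a \<in> real_roots n \<and>
        copair n (hadd (hscale k Lambda0) (rho_hat n)) a \<in> \<int>}"

definition root_lattice :: "nat \<Rightarrow> hs set" where
  "root_lattice n = {fin (\<lambda>l. \<Sum>i\<in>{1..n-1}. of_int (c i) * fst (alpha i) l) | c :: nat \<Rightarrow> int. True}"

definition transl :: "nat \<Rightarrow> hs \<Rightarrow> hs \<Rightarrow> hs" where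
  "transl n g l = hsub (hadd l (hscale (form n l delta) g))
      (hscale (form n l g + (1/2) * form n l delta * form n g g) delta)"

end

theory Submission
  imports Defs
begin

text \<open>Let P be the linear map fixing the finite part and sending Lambda_0 to Lambda_0/q and
  delta to q delta. It preserves the invariant form, so P s_a P^-1 = s_(P a) and
  P t_gamma P^-1 = t_(q P gamma). As P alpha_0 = beta_0 and P alpha_i = alpha_i, the map sigma
  agrees with conjugation by P on the simple reflections, hence, being multiplicative, on all
  of the affine Weyl group. It remains to see that t_gamma lies in the affine Weyl group for
  gamma in Q: t_theta = s_alpha0 s_theta, and w t_gamma w^-1 = t_(w gamma), so the set of such
  gamma is a lattice stable under the finite Weyl group and containing theta.
  The hypotheses on gcd q (n - 1), k and surjectivity of sigma only ensure that sigma exists.\<close>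

lemma hs_eqI:
  "(\<And>i. fst x i = fst y i) \<Longrightarrow> fst (snd x) = fst (snd y) \<Longrightarrow> snd (snd x) = snd (snd y) \<Longrightarrow> x = y"
  by (cases x; cases y) auto

lemma hscale_one [simp]: "hscale 1 x = x"
  by (simp add: hscale_def)

lemma form_hadd_left: "form n (hadd x y) z = form n x z + form n y z"
  by (simp add: form_def hadd_def sum.distrib algebra_simps)

lemma form_hadd_right: "form n z (hadd x y) = form n z x + form n z y"
  by (simp add: form_def hadd_def sum.distrib algebra_simps)

lemma form_hscale_left: "form n (hscale c x) z = c * form n x z"
  by (simp add: form_def hscale_def sum_distrib_left algebra_simps)

lemma form_hscale_right: "form n z (hscale c x) = c * form n z x"
  by (simp add: form_def hscale_def sum_distrib_left algebra_simps)

lemma form_hsub_left: "form n (hsub x y) z = form n x z - form n y z"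
  by (simp add: hsub_def form_hadd_left form_hscale_left)

lemma form_hsub_right: "form n z (hsub x y) = form n z x - form n z y"
  by (simp add: hsub_def form_hadd_right form_hscale_right)

lemmas form_linear = form_hadd_left form_hadd_right form_hscale_left form_hscale_right
  form_hsub_left form_hsub_right

lemma form_commute: "form n x y = form n y x"
  by (simp add: form_def algebra_simps)

lemma form_delta_delta [simp]: "form n delta delta = 0"
  by (simp add: form_def delta_def)

lemma form_fin_delta [simp]: "form n (fin v) delta = 0" "form n delta (fin v) = 0"
  by (simp_all add: form_def delta_def fin_def)

subsection \<open>Conjugation by linear isometries\<close>

definition hs_linear :: "(hs \<Rightarrow> hs) \<Rightarrow> bool" where
  "hs_linear f \<longleftrightarrow>
     (\<forall>x y. f (hadd x y) = hadd (f x) (f y)) \<and> (\<forall>c x. f (hscale c x) = hscale c (f x))"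

definition preserves_form :: "nat \<Rightarrow> (hs \<Rightarrow> hs) \<Rightarrow> bool" where
  "preserves_form n f \<longleftrightarrow> (\<forall>x y. form n (f x) (f y) = form n x y)"

lemma hs_linear_hadd: "hs_linear f \<Longrightarrow> f (hadd x y) = hadd (f x) (f y)"
  unfolding hs_linear_def by blast

lemma hs_linear_hscale: "hs_linear f \<Longrightarrow> f (hscale c x) = hscale c (f x)"
  unfolding hs_linear_def by blast

lemma hs_linear_hsub: "hs_linear f \<Longrightarrow> f (hsub x y) = hsub (f x) (f y)"
  by (simp add: hsub_def hs_linear_hadd hs_linear_hscale)

lemma refl_conj:
  assumes P: "hs_linear P" "preserves_form n P" and PQ: "\<And>x. P (Q x) = x"
  shows "P \<circ> refl n a \<circ> Q = refl n (P a)"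
proof
  fix l
  have "copair n (Q l) a = copair n l (P a)"
    using P(2) PQ unfolding copair_def preserves_form_def by metis
  then show "(P \<circ> refl n a \<circ> Q) l = refl n (P a) l"
    using P PQ by (simp add: refl_def hs_linear_hsub hs_linear_hscale)
qed

lemma transl_conj:
  assumes P: "hs_linear P" "preserves_form n P" and PQ: "\<And>x. P (Q x) = x"
    and P_delta: "P delta = hscale c delta"
  shows "P \<circ> transl n \<gamma> \<circ> Q = transl n (hscale c (P \<gamma>))"
proof
  fix l
  have form_P: "form n (P x) (P y) = form n x y" for x y
    using P(2) unfolding preserves_form_def by blast
  have "form n (Q l) delta = c * form n l delta"
    using form_P[of "Q l" delta] by (simp add: PQ P_delta form_hscale_right)
  moreover have "form n (Q l) \<gamma> = form n l (P \<gamma>)"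
    using form_P[of "Q l" \<gamma>] by (simp add: PQ)
  ultimately have "P (transl n \<gamma> (Q l)) = hsub (hadd l (hscale (c * form n l delta) (P \<gamma>)))
      (hscale (form n l (P \<gamma>) + 1/2 * (c * form n l delta) * form n (P \<gamma>) (P \<gamma>)) (hscale c delta))"
    by (simp add: transl_def hs_linear_hsub[OF P(1)] hs_linear_hadd[OF P(1)]
        hs_linear_hscale[OF P(1)] PQ P_delta form_P)
  also have "\<dots> = transl n (hscale c (P \<gamma>)) l"
    unfolding transl_def form_hscale_right form_hscale_left
    by (rule hs_eqI) (simp_all add: hsub_def hadd_def hscale_def algebra_simps)
  finally show "(P \<circ> transl n \<gamma> \<circ> Q) l = transl n (hscale c (P \<gamma>)) l"
    by simp
qed

lemma copair_hadd: "copair n (hadd x y) a = copair n x a + copair n y a"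
  unfolding copair_def by (simp add: form_linear add_divide_distrib)

lemma copair_hscale: "copair n (hscale c x) a = c * copair n x a"
  unfolding copair_def by (simp add: form_linear)

lemma copair_hsub: "copair n (hsub x y) a = copair n x a - copair n y a"
  by (simp add: hsub_def copair_hadd copair_hscale)

lemma copair_self: "form n a a \<noteq> 0 \<Longrightarrow> copair n a a = 2"
  unfolding copair_def by simp

lemma refl_linear: "hs_linear (refl n a)"
  unfolding hs_linear_def refl_def copair_hadd copair_hscale
  by (auto intro!: hs_eqI simp: hsub_def hadd_def hscale_def algebra_simps)

lemma refl_preserves_form:
  assumes "form n a a \<noteq> 0"
  shows "preserves_form n (refl n a)"
  unfolding preserves_form_def
proof (intro allI)
  fix x y
  have "form n (refl n a x) (refl n a y) = form n x y - copair n y a * form n x a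
     - copair n x a * form n a y + copair n x a * (copair n y a * form n a a)"
    unfolding refl_def by (simp add: form_linear algebra_simps)
  then show "form n (refl n a x) (refl n a y) = form n x y"
    using assms form_commute[of n a y] by (simp add: copair_def field_simps)
qed

lemma refl_refl:
  assumes "form n a a \<noteq> 0"
  shows "refl n a (refl n a x) = x"
proof -
  have "copair n (refl n a x) a = - copair n x a"
    unfolding refl_def copair_hsub copair_hscale copair_self[OF assms] by simp
  then show ?thesis
    unfolding refl_def[of n a "refl n a x"]
    by (auto intro!: hs_eqI simp: refl_def hsub_def hadd_def hscale_def)
qed

lemma refl_fixes_orthogonal: "form n x a = 0 \<Longrightarrow> refl n a x = x"
  by (auto intro!: hs_eqI simp: refl_def copair_def hsub_def hadd_def hscale_def)

lemma refl_comp_refl_comp_refl: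
  assumes "form n b b \<noteq> 0"
  shows "refl n b \<circ> refl n a \<circ> refl n b = refl n (refl n b a)"
  using refl_conj[OF refl_linear refl_preserves_form[OF assms]] refl_refl[OF assms] by blast

lemma refl_comp_transl_comp_refl:
  assumes "form n b b \<noteq> 0" "form n delta b = 0"
  shows "refl n b \<circ> transl n \<gamma> \<circ> refl n b = transl n (refl n b \<gamma>)"
proof -
  have "refl n b delta = hscale 1 delta"
    using refl_fixes_orthogonal[of n delta b] assms(2) by (simp add: form_commute[of n delta])
  from transl_conj[OF refl_linear refl_preserves_form[OF assms(1)] refl_refl[OF assms(1)] this]
  show ?thesis by simp
qed

lemma transl_transl:
  assumes "form n \<gamma> delta = 0" "form n \<eta> delta = 0"
  shows "transl n \<gamma> (transl n \<eta> l) = transl n (hadd \<gamma> \<eta>) l"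
proof -
  have 1: "form n (transl n \<eta> l) delta = form n l delta"
    unfolding transl_def using assms by (simp add: form_linear form_commute[of n delta])
  have 2: "form n (transl n \<eta> l) \<gamma> = form n l \<gamma> + form n l delta * form n \<eta> \<gamma>"
    unfolding transl_def using assms by (simp add: form_linear form_commute[of n delta])
  have 3: "form n (hadd \<gamma> \<eta>) (hadd \<gamma> \<eta>) = form n \<gamma> \<gamma> + 2 * form n \<gamma> \<eta> + form n \<eta> \<eta>"
    by (simp add: form_linear form_commute[of n \<eta> \<gamma>])
  show ?thesis
    unfolding transl_def[of n \<gamma>] 1 2 unfolding transl_def unfolding 3 unfolding form_hadd_right
    by (rule hs_eqI)
      (simp_all add: form_linear form_commute[of n \<eta> \<gamma>] hsub_def hadd_def hscale_def algebra_simps)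
qed

lemma transl_zero: "transl n (fin (\<lambda>_. 0)) = id"
  by (auto intro!: hs_eqI simp: transl_def form_def fin_def hsub_def hadd_def hscale_def)

lemma refl_delta_minus_comp_refl:
  assumes "form n a a = 2" "form n a delta = 0"
  shows "refl n (hsub delta a) \<circ> refl n a = transl n a"
proof
  fix l
  have da: "form n delta a = 0" using assms(2) form_commute by metis
  have c1: "copair n l a = form n l a" unfolding copair_def using assms by simp
  have "form n (hsub delta a) (hsub delta a) = 2"
    using assms da by (simp add: form_linear)
  then have c2: "copair n (refl n a l) (hsub delta a) = form n l delta + form n l a"
    unfolding copair_def refl_def c1 using assms da by (simp add: form_linear)
  show "(refl n (hsub delta a) \<circ> refl n a) l = transl n a l"
    unfolding comp_apply refl_def[of n "hsub delta a"] c2 unfolding refl_def c1 transl_def assms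
    by (rule hs_eqI) (simp_all add: hsub_def hadd_def hscale_def delta_def algebra_simps)
qed

lemma sum_ee_mult: "a < n \<Longrightarrow> (\<Sum>i<n. ee a i * f i) = f a"
proof -
  assume "a < n"
  have "(\<Sum>i<n. ee a i * f i) = (\<Sum>i<n. if i = a then f a else 0)"
    by (rule sum.cong) (auto simp: ee_def)
  then show ?thesis using \<open>a < n\<close> by simp
qed

lemma form_froot_left: "a < n \<Longrightarrow> b < n \<Longrightarrow> form n (froot a b) x = fst x a - fst x b"
  by (simp add: form_def froot_def fin_def left_diff_distrib sum_subtractf sum_ee_mult)

lemma froot_components:
  "fst (froot a b) i = ee a i - ee b i" "fst (snd (froot a b)) = 0" "snd (snd (froot a b)) = 0"
  by (simp_all add: froot_def fin_def)

lemma form_froot_delta [simp]: "form n (froot a b) delta = 0" "form n delta (froot a b) = 0"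
  by (simp_all add: froot_def)

lemma form_froot_self: "a < n \<Longrightarrow> b < n \<Longrightarrow> a \<noteq> b \<Longrightarrow> form n (froot a b) (froot a b) = 2"
  by (simp add: form_froot_left froot_components ee_def)

lemma form_alpha_self: "1 \<le> i \<Longrightarrow> i < n \<Longrightarrow> form n (alpha i) (alpha i) = 2"
  unfolding alpha_def by (rule form_froot_self) auto

lemma form_theta_self: "2 \<le> n \<Longrightarrow> form n (theta n) (theta n) = 2"
  unfolding theta_def by (rule form_froot_self) auto

lemma form_alpha0_self: "2 \<le> n \<Longrightarrow> form n (alpha0 n) (alpha0 n) = 2"
  using form_theta_self[of n]
  by (simp add: alpha0_def form_linear theta_def form_commute[of n delta])

lemma refl_froot_froot:
  assumes "a < n" "b < n" "c < n" "d < n" "c \<noteq> d"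
  shows "refl n (froot c d) (froot a b)
    = hsub (froot a b) (hscale ((ee a c - ee b c) - (ee a d - ee b d)) (froot c d))"
proof -
  have "copair n (froot a b) (froot c d) = (ee a c - ee b c) - (ee a d - ee b d)"
    using assms
    by (simp add: copair_def form_froot_self form_commute[of n "froot a b"] form_froot_left
        froot_components) (simp add: ee_def)
  then show ?thesis by (simp add: refl_def)
qed

lemma refl_alpha_froot_0:
  assumes "2 \<le> j" "j < n"
  shows "refl n (alpha j) (froot 0 j) = froot 0 (j - 1)"
  unfolding alpha_def using assms
  by (subst refl_froot_froot) (auto intro!: hs_eqI simp: froot_components hsub_def hadd_def hscale_def ee_def)

lemma refl_alpha_froot_0_pred:
  assumes "2 \<le> j" "j < n"
  shows "refl n (alpha j) (froot 0 (j - 1)) = froot 0 j"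
  using refl_alpha_froot_0[OF assms] refl_refl[of n "alpha j" "froot 0 j"] form_alpha_self[of j n] assms
  by simp

lemma refl_alpha_Suc_froot:
  assumes "m + 1 < i" "i < n"
  shows "refl n (alpha (m + 1)) (froot m i) = froot (m + 1) i"
  unfolding alpha_def using assms
  by (subst refl_froot_froot) (auto intro!: hs_eqI simp: froot_components hsub_def hadd_def hscale_def ee_def)

lemma gen_group_comp: "f \<in> gen_group S \<Longrightarrow> g \<in> gen_group S \<Longrightarrow> f \<circ> g \<in> gen_group S"
  by (induction f rule: gen_group.induct) (auto simp: comp_assoc intro: gen_group.intros)

lemma gen_group_generator: "s \<in> S \<Longrightarrow> s \<in> gen_group S"
  using gen_group.gen_step[OF gen_group.gen_id] by fastforce

lemma gen_group_inverse:
  assumes "\<And>s. s \<in> S \<Longrightarrow> s \<circ> s = id" "f \<in> gen_group S"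
  shows "\<exists>g \<in> gen_group S. g \<circ> f = id"
  using assms(2)
proof (induction f rule: gen_group.induct)
  case gen_id
  then show ?case by (metis comp_id gen_group.gen_id)
next
  case (gen_step f s)
  obtain g where g: "g \<in> gen_group S" "g \<circ> f = id"
    using gen_step.IH by blast
  have "g \<circ> s \<in> gen_group S"
    by (rule gen_group_comp[OF g(1) gen_group_generator[OF gen_step(2)]])
  moreover have "(g \<circ> s) \<circ> (s \<circ> f) = id"
    using assms(1)[OF gen_step(2)] g(2) by (metis comp_assoc comp_id)
  ultimately show ?case by blast
qed

lemma gen_group_hom_eq_conj:
  assumes hom: "\<forall>f \<in> gen_group S. \<forall>g \<in> gen_group S. \<sigma> (f \<circ> g) = \<sigma> f \<circ> \<sigma> g"
    and gens: "\<And>s. s \<in> S \<Longrightarrow> \<sigma> s = P \<circ> s \<circ> Q"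
    and QP: "Q \<circ> P = id" and PQ: "P \<circ> Q = id"
    and s0: "s0 \<in> S" "s0 \<circ> s0 = id"
    and f: "f \<in> gen_group S"
  shows "\<sigma> f = P \<circ> f \<circ> Q"
  using f
proof (induction f rule: gen_group.induct)
  case gen_id
  have "\<sigma> id = \<sigma> s0 \<circ> \<sigma> s0"
    using hom gen_group_generator[OF s0(1)] s0(2) by metis
  also have "\<dots> = P \<circ> (s0 \<circ> (Q \<circ> P) \<circ> s0) \<circ> Q"
    using gens[OF s0(1)] by (simp add: comp_assoc)
  also have "\<dots> = P \<circ> id \<circ> Q"
    using QP PQ s0(2) by simp
  finally show ?case .
next
  case (gen_step f s)
  have "\<sigma> (s \<circ> f) = \<sigma> s \<circ> \<sigma> f"
    using hom gen_step gen_group_generator by blast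
  also have "\<dots> = P \<circ> s \<circ> (Q \<circ> P) \<circ> f \<circ> Q"
    by (simp only: gens[OF gen_step(2)] gen_step.IH comp_assoc)
  also have "\<dots> = P \<circ> (s \<circ> f) \<circ> Q"
    by (simp add: QP comp_assoc)
  finally show ?case .
qed

subsection \<open>Translations in the affine Weyl group\<close>

definition transl_lattice :: "nat \<Rightarrow> hs set" where
  "transl_lattice n = {\<gamma>. form n \<gamma> delta = 0 \<and> transl n \<gamma> \<in> W_aff n}"

context
  fixes n :: nat
  assumes n2: "2 \<le> n"
begin

lemma S_aff_subset_W_aff: "s \<in> S_aff n \<Longrightarrow> s \<in> W_aff n"
  unfolding W_aff_def by (rule gen_group_generator)

lemma S_aff_involution:
  assumes "s \<in> S_aff n"
  shows "s \<circ> s = id"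
proof -
  obtain a where a: "s = refl n a" "form n a a \<noteq> 0"
  proof (cases "s = refl n (alpha0 n)")
    case True
    then show ?thesis using that form_alpha0_self[OF n2] by simp
  next
    case False
    then obtain i where "s = refl n (alpha i)" "1 \<le> i" "i \<le> n - 1"
      using assms by (auto simp: S_aff_def)
    then show ?thesis using that form_alpha_self[of i n] n2 by simp
  qed
  show ?thesis
    using refl_refl[OF a(2)] by (auto simp: a(1))
qed

lemma W_aff_comp: "f \<in> W_aff n \<Longrightarrow> g \<in> W_aff n \<Longrightarrow> f \<circ> g \<in> W_aff n"
  unfolding W_aff_def by (rule gen_group_comp)

lemma refl_alpha_in_W_aff: "1 \<le> i \<Longrightarrow> i \<le> n - 1 \<Longrightarrow> refl n (alpha i) \<in> W_aff n"
  by (rule S_aff_subset_W_aff) (auto simp: S_aff_def)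

lemma refl_froot_0_in_W_aff:
  assumes "1 \<le> j" "j \<le> n - 1"
  shows "refl n (froot 0 j) \<in> W_aff n"
  using assms
proof (induction j rule: dec_induct)
  case base
  show ?case using refl_alpha_in_W_aff[of 1] n2 by (simp add: alpha_def)
next
  case (step j)
  have "refl n (alpha (Suc j)) \<circ> refl n (froot 0 j) \<circ> refl n (alpha (Suc j)) \<in> W_aff n"
    using step refl_alpha_in_W_aff[of "Suc j"] by (intro W_aff_comp) auto
  moreover have "refl n (alpha (Suc j)) \<circ> refl n (froot 0 j) \<circ> refl n (alpha (Suc j))
      = refl n (froot 0 (Suc j))"
    using refl_comp_refl_comp_refl[of n "alpha (Suc j)"] form_alpha_self[of "Suc j" n] step
      refl_alpha_froot_0_pred[of "Suc j" n] by auto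
  ultimately show ?case by simp
qed

lemma theta_in_transl_lattice: "theta n \<in> transl_lattice n"
proof -
  have "transl n (theta n) = refl n (alpha0 n) \<circ> refl n (theta n)"
    using refl_delta_minus_comp_refl[of n "theta n"] form_theta_self[OF n2]
    by (simp add: alpha0_def theta_def)
  moreover have "refl n (alpha0 n) \<in> W_aff n"
    by (rule S_aff_subset_W_aff) (simp add: S_aff_def)
  moreover have "refl n (theta n) \<in> W_aff n"
    using refl_froot_0_in_W_aff[of "n - 1"] n2 by (simp add: theta_def)
  ultimately show ?thesis
    using W_aff_comp by (simp add: transl_lattice_def theta_def)
qed

lemma refl_alpha_in_transl_lattice:
  assumes "\<gamma> \<in> transl_lattice n" "1 \<le> i" "i \<le> n - 1"
  shows "refl n (alpha i) \<gamma> \<in> transl_lattice n"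
proof -
  have norm: "form n (alpha i) (alpha i) \<noteq> 0" using form_alpha_self[of i n] assms by simp
  have orth: "form n delta (alpha i) = 0" by (simp add: alpha_def)
  have "refl n (alpha i) \<circ> transl n \<gamma> \<circ> refl n (alpha i) \<in> W_aff n"
    using assms refl_alpha_in_W_aff by (auto simp: transl_lattice_def intro!: W_aff_comp)
  then have "transl n (refl n (alpha i) \<gamma>) \<in> W_aff n"
    by (simp add: refl_comp_transl_comp_refl[OF norm orth])
  moreover have "form n (refl n (alpha i) \<gamma>) (refl n (alpha i) delta) = form n \<gamma> delta"
    using refl_preserves_form[OF norm] unfolding preserves_form_def by blast
  ultimately show ?thesis
    using assms(1) refl_fixes_orthogonal[of n delta "alpha i"] orth
    by (simp add: transl_lattice_def form_commute[of n delta])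
qed

lemma hadd_in_transl_lattice:
  assumes "\<gamma> \<in> transl_lattice n" "\<eta> \<in> transl_lattice n"
  shows "hadd \<gamma> \<eta> \<in> transl_lattice n"
proof -
  have "transl n (hadd \<gamma> \<eta>) = transl n \<gamma> \<circ> transl n \<eta>"
    using assms transl_transl[of n \<gamma> \<eta>] by (auto simp: transl_lattice_def fun_eq_iff)
  then show ?thesis
    using assms W_aff_comp by (auto simp: transl_lattice_def form_linear)
qed

lemma zero_in_transl_lattice: "fin (\<lambda>_. 0) \<in> transl_lattice n"
  using transl_zero[of n] gen_group.gen_id by (simp add: transl_lattice_def W_aff_def)

lemma uminus_in_transl_lattice:
  assumes "\<gamma> \<in> transl_lattice n"
  shows "hscale (-1) \<gamma> \<in> transl_lattice n"
proof -
  obtain w where w: "w \<in> W_aff n" "w \<circ> transl n \<gamma> = id"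
    using gen_group_inverse[of "S_aff n" "transl n \<gamma>"] S_aff_involution assms
    by (auto simp: transl_lattice_def W_aff_def)
  have "hadd \<gamma> (hscale (-1) \<gamma>) = fin (\<lambda>_. 0)"
    by (rule hs_eqI) (simp_all add: hadd_def hscale_def fin_def)
  then have "transl n \<gamma> \<circ> transl n (hscale (-1) \<gamma>) = id"
    using transl_transl[of n \<gamma> "hscale (-1) \<gamma>"] assms transl_zero[of n]
    by (auto simp: transl_lattice_def fun_eq_iff form_linear)
  then have "w = transl n (hscale (-1) \<gamma>)"
    using w(2) by (metis comp_assoc comp_id id_comp)
  then show ?thesis
    using w assms by (simp add: transl_lattice_def form_linear)
qed

lemma of_nat_hscale_in_transl_lattice:
  "\<gamma> \<in> transl_lattice n \<Longrightarrow> hscale (of_nat m) \<gamma> \<in> transl_lattice n"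
proof (induction m)
  case 0
  have "hscale 0 \<gamma> = fin (\<lambda>_. 0)"
    by (rule hs_eqI) (simp_all add: hscale_def fin_def)
  then show ?case using zero_in_transl_lattice by simp
next
  case (Suc m)
  have "hscale (of_nat (Suc m)) \<gamma> = hadd \<gamma> (hscale (of_nat m) \<gamma>)"
    by (rule hs_eqI) (simp_all add: hscale_def hadd_def algebra_simps)
  then show ?case using Suc hadd_in_transl_lattice by simp
qed

lemma of_int_hscale_in_transl_lattice:
  assumes "\<gamma> \<in> transl_lattice n"
  shows "hscale (of_int c) \<gamma> \<in> transl_lattice n"
proof (cases "0 \<le> c")
  case True
  then show ?thesis
    using of_nat_hscale_in_transl_lattice[OF assms, of "nat c"] by simp
next
  case False
  then have "hscale (of_int c) \<gamma> = hscale (-1) (hscale (of_nat (nat (- c))) \<gamma>)"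
    by (intro hs_eqI) (simp_all add: hscale_def)
  then show ?thesis
    using uminus_in_transl_lattice of_nat_hscale_in_transl_lattice[OF assms] by simp
qed

lemma froot_0_in_transl_lattice:
  assumes "1 \<le> j" "j \<le> n - 1"
  shows "froot 0 j \<in> transl_lattice n"
  using assms(2)
proof (induction j rule: inc_induct)
  case base
  show ?case using theta_in_transl_lattice by (simp add: theta_def)
next
  case (step j)
  then have "refl n (alpha (Suc j)) (froot 0 (Suc j)) \<in> transl_lattice n"
    by (intro refl_alpha_in_transl_lattice) auto
  then show ?case
    using refl_alpha_froot_0[of "Suc j" n] step assms(1) by simp
qed

lemma froot_in_transl_lattice:
  assumes "m < i" "i \<le> n - 1"
  shows "froot m i \<in> transl_lattice n"
  using assms(1)
proof (induction m)
  case 0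
  then show ?case using froot_0_in_transl_lattice assms(2) by simp
next
  case (Suc m)
  then have "refl n (alpha (m + 1)) (froot m i) \<in> transl_lattice n"
    using assms(2) by (intro refl_alpha_in_transl_lattice) auto
  then show ?case
    using refl_alpha_Suc_froot[of m i n] Suc assms(2) n2 by simp
qed

lemma root_lattice_subset_transl_lattice: "root_lattice n \<subseteq> transl_lattice n"
proof -
  have "fin (\<lambda>l. \<Sum>i\<in>A. of_int (c i) * fst (alpha i) l) \<in> transl_lattice n"
    if "finite A" "A \<subseteq> {1..n - 1}" for A and c :: "nat \<Rightarrow> int"
    using that
  proof (induction A rule: finite_induct)
    case empty
    then show ?case using zero_in_transl_lattice by simp
  next
    case (insert i A)
    have "fin (\<lambda>l. \<Sum>j\<in>insert i A. of_int (c j) * fst (alpha j) l)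
        = hadd (hscale (of_int (c i)) (alpha i)) (fin (\<lambda>l. \<Sum>j\<in>A. of_int (c j) * fst (alpha j) l))"
      using insert by (intro hs_eqI) (simp_all add: fin_def hadd_def hscale_def alpha_def froot_components)
    moreover have "alpha i \<in> transl_lattice n"
      using insert unfolding alpha_def by (intro froot_in_transl_lattice) auto
    ultimately show ?case
      using insert of_int_hscale_in_transl_lattice hadd_in_transl_lattice by simp
  qed
  then show ?thesis by (auto simp: root_lattice_def)
qed

end

subsection \<open>Rescaling the null direction\<close>

definition rescale :: "real \<Rightarrow> hs \<Rightarrow> hs" where
  "rescale c x = (fst x, fst (snd x) / c, c * snd (snd x))"

lemma rescale_linear: "hs_linear (rescale c)"
  unfolding hs_linear_def rescale_def by (auto simp: hadd_def hscale_def add_divide_distrib distrib_left)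

lemma rescale_preserves_form: "c \<noteq> 0 \<Longrightarrow> preserves_form n (rescale c)"
  unfolding preserves_form_def rescale_def form_def by auto

lemma rescale_rescale_inverse: "c \<noteq> 0 \<Longrightarrow> rescale c (rescale (1 / c) x) = x"
  unfolding rescale_def by auto

lemma rescale_delta: "rescale c delta = hscale c delta"
  unfolding rescale_def delta_def hscale_def by simp

lemma rescale_fin: "rescale c (fin v) = fin v"
  unfolding rescale_def fin_def by simp

lemma rescale_alpha: "rescale c (alpha i) = alpha i"
  by (simp add: alpha_def froot_def rescale_fin)

lemma rescale_alpha0: "rescale (real q) (alpha0 n) = beta0 n q"
  unfolding alpha0_def beta0_def theta_def froot_def
  by (simp add: hs_linear_hsub[OF rescale_linear] rescale_fin rescale_delta)

lemma rescale_comp_refl_comp_rescale: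
  "c \<noteq> 0 \<Longrightarrow> rescale c \<circ> refl n a \<circ> rescale (1 / c) = refl n (rescale c a)"
  by (rule refl_conj[OF rescale_linear rescale_preserves_form rescale_rescale_inverse])

lemma rescale_comp_transl_comp_rescale:
  "c \<noteq> 0 \<Longrightarrow> rescale c \<circ> transl n \<gamma> \<circ> rescale (1 / c) = transl n (hscale c (rescale c \<gamma>))"
  by (rule transl_conj[OF rescale_linear rescale_preserves_form rescale_rescale_inverse rescale_delta])

theorem mainTheorem7:
  fixes n q :: nat and k :: real and \<sigma> :: "(hs \<Rightarrow> hs) \<Rightarrow> (hs \<Rightarrow> hs)"
  assumes "n \<ge> 3" and "q \<ge> 1" and "gcd q (n - 1) = 1"
    and "k = - real n + real (n - 1) / real q"
    and "bij_betw \<sigma> (W_aff n) (W_k n k)"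
    and "\<forall>f \<in> W_aff n. \<forall>g \<in> W_aff n. \<sigma> (f \<circ> g) = \<sigma> f \<circ> \<sigma> g"
    and "\<sigma> (refl n (alpha0 n)) = refl n (beta0 n q)"
    and "\<forall>i. 1 \<le> i \<and> i \<le> n - 1 \<longrightarrow> \<sigma> (refl n (alpha i)) = refl n (alpha i)"
  shows "\<forall>\<gamma> \<in> root_lattice n. \<sigma> (transl n \<gamma>) = transl n (hscale (real q) \<gamma>)"
proof
  fix \<gamma> assume \<gamma>: "\<gamma> \<in> root_lattice n"
  have n2: "2 \<le> n" and q: "real q \<noteq> 0" using assms(1,2) by auto
  let ?P = "rescale (real q)" and ?Q = "rescale (1 / real q)"
  have gens: "\<sigma> s = ?P \<circ> s \<circ> ?Q" if "s \<in> S_aff n" for s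
    using that assms(7,8)
    by (auto simp: S_aff_def rescale_comp_refl_comp_rescale[OF q] rescale_alpha rescale_alpha0)
  have "?Q \<circ> ?P = id" "?P \<circ> ?Q = id"
    using rescale_rescale_inverse[of "real q"] rescale_rescale_inverse[of "1 / real q"] q
    by (auto simp: fun_eq_iff)
  moreover have "transl n \<gamma> \<in> W_aff n"
    using root_lattice_subset_transl_lattice[OF n2] \<gamma> by (auto simp: transl_lattice_def)
  ultimately have "\<sigma> (transl n \<gamma>) = ?P \<circ> transl n \<gamma> \<circ> ?Q"
    using gen_group_hom_eq_conj[OF assms(6)[unfolded W_aff_def] gens]
      S_aff_involution[OF n2] by (auto simp: S_aff_def W_aff_def)
  also have "\<dots> = transl n (hscale (real q) \<gamma>)"
    using \<gamma> by (auto simp: rescale_comp_transl_comp_rescale[OF q] root_lattice_def rescale_fin)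
  finally show "\<sigma> (transl n \<gamma>) = transl n (hscale (real q) \<gamma>)" .
qed

end
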